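(* Let $n\ge 1$, $d_1,\dots,d_n\ge 1$, $L_i\in\mathbb{C}^{d_i\times d_i}$ ($i=1,\dots,n$) and $C_{i,i-1}\in\mathbb{C}^{d_i\times d_{i-1}}$ ($i=2,\dots,n$). Assume: (i) each $L_i$ is invertible and diagonalizable, $L_iV_i=V_i\Lambda_i$ with $V_i$ invertible and $\Lambda_i=\mathrm{diag}(\lambda_{i,1},\dots,\lambda_{i,d_i})$; (ii) $\sigma(L_i)\cap\sigma(L_j)=\emptyset$ for all $i\neq j$; (iii) $\|L_1\|<\|L_2\|<\cdots<\|L_n\|\le 1$. Let $\mathsf{NonLin}(x_1,\dots,x_n)=(L_1x_1+N_1(x_1),\;L_2x_2+C_{2,1}x_1+N_2(x_1,x_2),\;\dots,\;L_nx_n+C_{n,n-1}x_{n-1}+N_n(x_{n-1},x_n))$ for some maps $N_1:\mathbb{C}^{d_1}\to\mathbb{C}^{d_1}$, $N_i:\mathbb{C}^{d_{i-1}}\times\mathbb{C}^{d_i}\to\mathbb{C}^{d_i}$, and let $\tau$ be a homeomorphism of $\mathbb{C}^{d_1}\times\cdots\times\mathbb{C}^{d_n}$ with $\mathsf{Lin}=\tau^{-1}\circ\mathsf{NonLin}\circ\tau$. Then for every $i\in\{1,\dots,n\}$, $s_i\in\{1,\dots,d_i\}$ and $y\in\mathbb{C}^{d_1}\times\cdots\times\mathbb{C}^{d_n}$, $$\lim_{t\to\infty}\frac{\Big|(\Psi_{i,s_i}\circ\tau^{-1})\big(\mathsf{NonLin}^{\circ t}(y)\big)-(\Psi_{i,s_i}\circ\tau^{-1})\Big((\tau\circ\mathsf{Nom}\circ\tau^{-1})^{\circ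 t}\big((\tau\circ\mathsf{pert}\circ\tau^{-1})(y)\big)\Big)\Big|}{\|L_i\|^t}=0,$$ i.e. $|\mathcal U_{\mathsf{NonLin}}^{\circ t}(\Psi_{i,s_i}\circ\tau^{-1})(y)-\mathcal U_{\tau\circ\mathsf{Nom}\circ\tau^{-1}}^{\circ t}(\Psi_{i,s_i}\circ\tau^{-1})((\tau\circ\mathsf{pert}\circ\tau^{-1})(y))|/\|L_i\|^t\to 0$, where $\mathcal U_F f=f\circ F$.
   Context: Each $\mathbb{C}^{d_i}$ carries a fixed norm, matrices carry the induced operator norm. $\mathsf{Lin}(x_1,\dots,x_n)=(L_1x_1,\;L_2x_2+C_{2,1}x_1,\;\dots,\;L_nx_n+C_{n,n-1}x_{n-1})$, $\mathsf{Nom}(x_1,\dots,x_n)=(L_1x_1,\dots,L_nx_n)$, $\mathsf{F}^{\circ t}$ is the $t$-fold iterate. $\psi_{i,s}(x_i)=\hat e_s^{*}V_i^{-1}x_i$ ($\hat e_s$ the $s$-th standard basis vector of $\mathbb{C}^{d_i}$) and $\Psi_{i,s}(x_1,\dots,x_n)=\psi_{i,s}(x_i)$. Matrices $D_{i,j}$ ($1\le j\le i\le n$) are defined recursively in $i$: $D_{i,i}=I_{d_i}$; for $i\ge 2$, $1\le j\le i-1$, $[\tilde C_{i,j}]_{\ell,m}=[V_i^{-1}C_{i,i-1}D_{i-1,j}V_j]_{\ell,m}(1-\lambda_{j,m}/\lambda_{i,\ell})^{-1}$ and $D_{i,j}=L_i^{-1}V_i\tilde C_{i,j}V_j^{-1}$.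 Define $\mathsf{pert}_1(x_1)=x_1$, $\mathsf{pert}_i(x_1,\dots,x_i)=x_i+\sum_{j=1}^{i-1}(-1)^{i-1-j}D_{i,j}\mathsf{pert}_j(x_1,\dots,x_j)$ for $i\ge2$, and $\mathsf{pert}(x)=(\mathsf{pert}_1(x_1),\dots,\mathsf{pert}_n(x_1,\dots,x_n))$. *)

theory Defs
  imports Complex_Main "Jordan_Normal_Form.Spectral_Radius"
begin

text \<open>Blocks are indexed by i in {1..n}; coordinates inside a block
  C^(d i) are 0-based (JNF vectors), so the paper's s in {1..d_i} is s in {0..<d i}.
  A point of C^(d 1) x ... x C^(d n) is a function x :: nat => complex vec with
  x i in carrier_vec (d i) for i in {1..n} and x i = 0_v 0 otherwise.\<close>

definition prodsp :: "nat \<Rightarrow> (nat \<Rightarrow> nat) \<Rightarrow> (nat \<Rightarrow> complex vec) set" where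
  "prodsp n d = {x. (\<forall>i\<in>{1..n}. x i \<in> carrier_vec (d i)) \<and> (\<forall>i. i \<notin> {1..n} \<longrightarrow> x i = 0\<^sub>v 0)}"

definition is_vnorm :: "nat \<Rightarrow> (complex vec \<Rightarrow> real) \<Rightarrow> bool" where
  "is_vnorm d N \<longleftrightarrow>
     (\<forall>v\<in>carrier_vec d. 0 \<le> N v \<and> (N v = 0 \<longleftrightarrow> v = 0\<^sub>v d)) \<and>
     (\<forall>c. \<forall>v\<in>carrier_vec d. N (c \<cdot>\<^sub>v v) = cmod c * N v) \<and>
     (\<forall>v\<in>carrier_vec d. \<forall>w\<in>carrier_vec d. N (v + w) \<le> N v + N w)"

definition op_norm :: "nat \<Rightarrow> (complex vec \<Rightarrow> real) \<Rightarrow> complex mat \<Rightarrow> real" where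
  "op_norm d N A = Sup ((\<lambda>v. N (A *\<^sub>v v)) ` {v \<in> carrier_vec d. N v = 1})"

definition minv :: "nat \<Rightarrow> complex mat \<Rightarrow> complex mat" where
  "minv d A = (SOME B. B \<in> carrier_mat d d \<and> A * B = 1\<^sub>m d \<and> B * A = 1\<^sub>m d)"

definition diag_of :: "nat \<Rightarrow> (nat \<Rightarrow> complex) \<Rightarrow> complex mat" where
  "diag_of d f = mat d d (\<lambda>(l, m). if l = m then f l else 0)"

definition distX :: "nat \<Rightarrow> (nat \<Rightarrow> nat) \<Rightarrow> (nat \<Rightarrow> complex vec) \<Rightarrow> (nat \<Rightarrow> complex vec) \<Rightarrow> real" where
  "distX n d x y = (\<Sum>i\<in>{1..n}. \<Sum>k<d i. cmod (x i $ k - y i $ k))"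

definition contX :: "nat \<Rightarrow> (nat \<Rightarrow> nat) \<Rightarrow> ((nat \<Rightarrow> complex vec) \<Rightarrow> (nat \<Rightarrow> complex vec)) \<Rightarrow> bool" where
  "contX n d f \<longleftrightarrow> (\<forall>x\<in>prodsp n d. \<forall>e>0. \<exists>\<delta>>0. \<forall>y\<in>prodsp n d.
      distX n d x y < \<delta> \<longrightarrow> distX n d (f x) (f y) < e)"

definition homeoX :: "nat \<Rightarrow> (nat \<Rightarrow> nat) \<Rightarrow> ((nat \<Rightarrow> complex vec) \<Rightarrow> (nat \<Rightarrow> complex vec))
     \<Rightarrow> ((nat \<Rightarrow> complex vec) \<Rightarrow> (nat \<Rightarrow> complex vec)) \<Rightarrow> bool" where
  "homeoX n d f g \<longleftrightarrow>
     (\<forall>x\<in>prodsp n d. f x \<in> prodsp n d) \<and> (\<forall>y\<in>prodsp n d. g y \<in> prodsp n d) \<and>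
     (\<forall>x\<in>prodsp n d. g (f x) = x) \<and> (\<forall>y\<in>prodsp n d. f (g y) = y) \<and>
     contX n d f \<and> contX n d g"

definition Lin :: "nat \<Rightarrow> (nat \<Rightarrow> complex mat) \<Rightarrow> (nat \<Rightarrow> complex mat) \<Rightarrow> (nat \<Rightarrow> complex vec) \<Rightarrow> (nat \<Rightarrow> complex vec)" where
  "Lin n L C x = (\<lambda>i. if i \<in> {1..n} then
       (if i = 1 then L 1 *\<^sub>v x 1 else L i *\<^sub>v x i + C i *\<^sub>v x (i - 1))
     else 0\<^sub>v 0)"

definition Nom :: "nat \<Rightarrow> (nat \<Rightarrow> complex mat) \<Rightarrow> (nat \<Rightarrow> complex vec) \<Rightarrow> (nat \<Rightarrow> complex vec)" where
  "Nom n L x = (\<lambda>i. if i \<in> {1..n} then L i *\<^sub>v x i else 0\<^sub>v 0)"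

definition NonLin :: "nat \<Rightarrow> (nat \<Rightarrow> complex mat) \<Rightarrow> (nat \<Rightarrow> complex mat) \<Rightarrow> (complex vec \<Rightarrow> complex vec)
     \<Rightarrow> (nat \<Rightarrow> complex vec \<Rightarrow> complex vec \<Rightarrow> complex vec) \<Rightarrow> (nat \<Rightarrow> complex vec) \<Rightarrow> (nat \<Rightarrow> complex vec)" where
  "NonLin n L C N1 N x = (\<lambda>i. if i \<in> {1..n} then
       (if i = 1 then L 1 *\<^sub>v x 1 + N1 (x 1)
        else L i *\<^sub>v x i + C i *\<^sub>v x (i - 1) + N i (x (i - 1)) (x i))
     else 0\<^sub>v 0)"

definition Psi :: "(nat \<Rightarrow> nat) \<Rightarrow> (nat \<Rightarrow> complex mat) \<Rightarrow> nat \<Rightarrow> nat \<Rightarrow> (nat \<Rightarrow> complex vec) \<Rightarrow> complex" where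
  "Psi d V i s x = (minv (d i) (V i) *\<^sub>v x i) $ s"

text \<open>The matrices D_(i,j), recursively in i (only meaningful for 1 <= j <= i).\<close>
primrec Dm :: "(nat \<Rightarrow> nat) \<Rightarrow> (nat \<Rightarrow> complex mat) \<Rightarrow> (nat \<Rightarrow> complex mat) \<Rightarrow> (nat \<Rightarrow> complex mat)
     \<Rightarrow> (nat \<Rightarrow> nat \<Rightarrow> complex) \<Rightarrow> nat \<Rightarrow> nat \<Rightarrow> complex mat" where
  "Dm d L C V lam 0 j = 1\<^sub>m (d 0)"
| "Dm d L C V lam (Suc k) j =
     (if j = Suc k then 1\<^sub>m (d (Suc k))
      else (let i = Suc k;
                M = minv (d i) (V i) * C i * Dm d L C V lam k j * V j;
                Ct = mat (d i) (d j) (\<lambda>(l, m). M $$ (l, m) * inverse (1 - lam j m / lam i l))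
            in minv (d i) (L i) * V i * Ct * minv (d j) (V j)))"

text \<open>pert: pert_1 = x_1, pert_i = x_i + sum_(j=1)^(i-1) (-1)^(i-1-j) D_(i,j) pert_j.
  pert_list k is the list [pert_1 x, ..., pert_k x].\<close>
primrec pert_list :: "(nat \<Rightarrow> nat) \<Rightarrow> (nat \<Rightarrow> complex mat) \<Rightarrow> (nat \<Rightarrow> complex mat) \<Rightarrow> (nat \<Rightarrow> complex mat)
     \<Rightarrow> (nat \<Rightarrow> nat \<Rightarrow> complex) \<Rightarrow> (nat \<Rightarrow> complex vec) \<Rightarrow> nat \<Rightarrow> complex vec list" where
  "pert_list d L C V lam x 0 = []"
| "pert_list d L C V lam x (Suc k) =
     (let ps = pert_list d L C V lam x k; i = Suc k in
      ps @ [x i + vec (d i) (\<lambda>k. \<Sum>j\<in>{1..<i}. (-1) ^ (i - 1 - j) * (Dm d L C V lam i j *\<^sub>v ps ! (j - 1)) $ k)])"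

definition pert :: "nat \<Rightarrow> (nat \<Rightarrow> nat) \<Rightarrow> (nat \<Rightarrow> complex mat) \<Rightarrow> (nat \<Rightarrow> complex mat) \<Rightarrow> (nat \<Rightarrow> complex mat)
     \<Rightarrow> (nat \<Rightarrow> nat \<Rightarrow> complex) \<Rightarrow> (nat \<Rightarrow> complex vec) \<Rightarrow> (nat \<Rightarrow> complex vec)" where
  "pert n d L C V lam x = (\<lambda>i. if i \<in> {1..n} then pert_list d L C V lam x i ! (i - 1) else 0\<^sub>v 0)"

end

theory Submission
  imports Defs "HOL-Computational_Algebra.Fundamental_Theorem_Algebra"
begin

text \<open>Conjugating by \<tau> reduces the claim to the linear maps Lin and Nom. The matrices D_(i,j)
  solve the Sylvester equations L_i D_(i,j) = D_(i,j) L_j + C_i D_(i-1,j); in the eigenbases of L_i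
  and L_j this equation decouples entrywise and is solvable because the spectra are disjoint. By
  these equations the i-th block of Lin^t x is the alternating sum of D_(i,j) L_j^t pert_j(x) over
  j \<le> i. The term j = i is the i-th block of Nom^t (pert x); the others are combinations of
  powers lam_(j,m)^t with j < i, and |lam_(j,m)| \<le> ||L_j|| < ||L_i|| makes them o(||L_i||^t).\<close>

section \<open>Norms on C^d and the operator norm\<close>

lemma vnorm_nonneg: "is_vnorm d N \<Longrightarrow> v \<in> carrier_vec d \<Longrightarrow> 0 \<le> N v"
  unfolding is_vnorm_def by blast

lemma vnorm_zero_vec: "is_vnorm d N \<Longrightarrow> N (0\<^sub>v d) = 0"
  unfolding is_vnorm_def using zero_carrier_vec[of d] by blast

lemma vnorm_pos: "is_vnorm d N \<Longrightarrow> v \<in> carrier_vec d \<Longrightarrow> v \<noteq> 0\<^sub>v d \<Longrightarrow> 0 < N v"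
  unfolding is_vnorm_def by (metis order_le_less)

lemma vnorm_smult: "is_vnorm d N \<Longrightarrow> v \<in> carrier_vec d \<Longrightarrow> N (c \<cdot>\<^sub>v v) = cmod c * N v"
  unfolding is_vnorm_def by blast

lemma vnorm_triangle:
  "is_vnorm d N \<Longrightarrow> v \<in> carrier_vec d \<Longrightarrow> w \<in> carrier_vec d \<Longrightarrow> N (v + w) \<le> N v + N w"
  unfolding is_vnorm_def by blast

lemma vnorm_le_sum_unit_vec:
  assumes N: "is_vnorm d N" and v: "v \<in> carrier_vec d"
  shows "N v \<le> (\<Sum>k<d. cmod (v $ k) * N (unit_vec d k))"
proof -
  define trunc where "trunc m = vec d (\<lambda>k. if k < m then v $ k else 0)" for m
  have "N (trunc m) \<le> (\<Sum>k<m. cmod (v $ k) * N (unit_vec d k))" if "m \<le> d" for m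
    using that
  proof (induction m)
    case 0
    have "trunc 0 = 0\<^sub>v d" unfolding trunc_def by (intro eq_vecI) auto
    then show ?case using vnorm_zero_vec[OF N] by simp
  next
    case (Suc m)
    have "trunc (Suc m) = trunc m + (v $ m) \<cdot>\<^sub>v unit_vec d m"
      unfolding trunc_def by (intro eq_vecI) (auto simp: unit_vec_def less_Suc_eq)
    then have "N (trunc (Suc m)) \<le> N (trunc m) + N ((v $ m) \<cdot>\<^sub>v unit_vec d m)"
      by (simp only:) (rule vnorm_triangle[OF N], auto simp: trunc_def)
    also have "\<dots> = N (trunc m) + cmod (v $ m) * N (unit_vec d m)"
      using vnorm_smult[OF N] by simp
    finally show ?case using Suc by simp
  qed
  moreover have "trunc d = v" unfolding trunc_def using v by (intro eq_vecI) auto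
  ultimately show ?thesis by force
qed

lemma convergent_subseq_finitely_many:
  fixes f :: "nat \<Rightarrow> nat \<Rightarrow> complex"
  assumes bound: "\<And>k t. k < m \<Longrightarrow> cmod (f k t) \<le> B"
  shows "\<exists>r. strict_mono r \<and> (\<forall>k<m. convergent (\<lambda>t. f k (r t)))"
  using bound
proof (induction m)
  case 0
  show ?case using strict_mono_id by auto
next
  case (Suc m)
  have "\<exists>r. strict_mono r \<and> (\<forall>k<m. convergent (\<lambda>t. f k (r t)))"
    by (rule Suc.IH) (simp add: Suc.prems)
  then obtain r where r: "strict_mono r" "\<forall>k<m. convergent (\<lambda>t. f k (r t))" by blast
  have "\<forall>t. cmod (f m (r t)) \<le> B" by (simp add: Suc.prems)
  from Bolzano_Weierstrass_complex_disc[OF this]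
  obtain l r' where r': "strict_mono r'" "((\<lambda>t. f m (r t)) \<circ> r') \<longlonglongrightarrow> l"
    unfolding LIMSEQ_iff o_def by blast
  have "convergent (\<lambda>t. f k (r (r' t)))" if k: "k < Suc m" for k
  proof (cases "k = m")
    case True
    then show ?thesis using r'(2) by (auto simp: convergent_def o_def)
  next
    case False
    with k have "k < m" by simp
    then obtain l' where "(\<lambda>t. f k (r t)) \<longlonglongrightarrow> l'" using r(2) by (auto simp: convergent_def)
    from LIMSEQ_subseq_LIMSEQ[OF this r'(1)] show ?thesis by (auto simp: convergent_def o_def)
  qed
  then show ?case using strict_mono_o[OF r(1) r'(1)] by (auto simp: o_def)
qed

lemma vnorm_l1_sphere_not_null:
  assumes N: "is_vnorm d N" and w: "\<And>t. w t \<in> carrier_vec d"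
    and l1_w: "\<And>t. (\<Sum>k<d. cmod (w t $ k)) = 1" and N_w: "(\<lambda>t. N (w t)) \<longlonglongrightarrow> 0"
  shows False
proof -
  have "cmod (w t $ k) \<le> 1" if "k < d" for k t
    using member_le_sum[of k "{..<d}" "\<lambda>k. cmod (w t $ k)"] that l1_w[of t] by simp
  then obtain r where r: "strict_mono r" "\<forall>k<d. convergent (\<lambda>t. w (r t) $ k)"
    using convergent_subseq_finitely_many[of d "\<lambda>k t. w t $ k" 1] by blast
  define a where "a = vec d (\<lambda>k. lim (\<lambda>t. w (r t) $ k))"
  have a: "a \<in> carrier_vec d" unfolding a_def by simp
  have w_to_a: "(\<lambda>t. w (r t) $ k) \<longlonglongrightarrow> a $ k" if "k < d" for k
    using r(2) that by (simp add: a_def convergent_LIMSEQ_iff)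
  have dist_0: "(\<lambda>t. cmod (a $ k - w (r t) $ k)) \<longlonglongrightarrow> 0" if "k < d" for k
    using tendsto_diff[OF tendsto_const w_to_a[OF that], of "a $ k"] tendsto_norm_zero by fastforce
  have "(\<lambda>t. \<Sum>k<d. cmod (w (r t) $ k)) \<longlonglongrightarrow> (\<Sum>k<d. cmod (a $ k))"
    by (intro tendsto_intros w_to_a) simp
  then have "(\<lambda>t. 1) \<longlonglongrightarrow> (\<Sum>k<d. cmod (a $ k))" using l1_w by simp
  then have "(\<Sum>k<d. cmod (a $ k)) = 1" using LIMSEQ_unique[OF tendsto_const] by metis
  then have "a \<noteq> 0\<^sub>v d" by auto
  then have "0 < N a" using vnorm_pos[OF N a] by simp
  define u where "u t = N (w (r t)) + (\<Sum>k<d. cmod (a $ k - w (r t) $ k) * N (unit_vec d k))" for t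
  have "N a \<le> u t" for t
  proof -
    have diff: "a - w (r t) \<in> carrier_vec d" using a w[of "r t"] by simp
    have "w (r t) + (a - w (r t)) = a" using a w[of "r t"] by auto
    then have "N a \<le> N (w (r t)) + N (a - w (r t))"
      using vnorm_triangle[OF N w[of "r t"] diff] by simp
    also have "N (a - w (r t)) \<le> (\<Sum>k<d. cmod (a $ k - w (r t) $ k) * N (unit_vec d k))"
      using vnorm_le_sum_unit_vec[OF N diff] a w[of "r t"] by simp
    finally show ?thesis unfolding u_def by simp
  qed
  moreover have "u \<longlonglongrightarrow> 0 + (\<Sum>k<d. 0 * N (unit_vec d k))"
    unfolding u_def using LIMSEQ_subseq_LIMSEQ[OF N_w r(1)] dist_0
    by (intro tendsto_add tendsto_sum tendsto_mult tendsto_const) (auto simp: o_def)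
  ultimately have "N a \<le> 0" using LIMSEQ_le_const by force
  with \<open>0 < N a\<close> show False by simp
qed

lemma vnorm_dominates_l1:
  assumes N: "is_vnorm d N"
  shows "\<exists>c>0. \<forall>v\<in>carrier_vec d. (\<Sum>k<d. cmod (v $ k)) \<le> c * N v"
proof (rule ccontr)
  define l1 where "l1 v = (\<Sum>k<d. cmod (v $ k))" for v :: "complex vec"
  assume "\<not> ?thesis"
  then have "\<forall>t::nat. \<exists>v\<in>carrier_vec d. real (Suc t) * N v < l1 v"
    unfolding l1_def by (metis not_le of_nat_0_less_iff zero_less_Suc)
  then obtain w0 where w0: "\<And>t. w0 t \<in> carrier_vec d" "\<And>t. real (Suc t) * N (w0 t) < l1 (w0 t)"
    by metis
  have l1_pos: "0 < l1 (w0 t)" for t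
    using w0(2)[of t] vnorm_nonneg[OF N w0(1)[of t]] by (meson le_less_trans mult_nonneg_nonneg of_nat_0_le_iff)
  define w where "w t = complex_of_real (1 / l1 (w0 t)) \<cdot>\<^sub>v w0 t" for t
  have w: "w t \<in> carrier_vec d" for t unfolding w_def using w0(1) by simp
  have "l1 (w t) = 1" for t
  proof -
    have "cmod (w t $ k) = cmod (w0 t $ k) / l1 (w0 t)" if "k < d" for k
      using that w0(1)[of t] l1_pos[of t] by (simp add: w_def norm_divide)
    then have "l1 (w t) = (\<Sum>k<d. cmod (w0 t $ k) / l1 (w0 t))"
      unfolding l1_def[of "w t"] by simp
    also have "\<dots> = l1 (w0 t) / l1 (w0 t)"
      unfolding l1_def by (rule sum_divide_distrib[symmetric])
    finally show ?thesis using l1_pos[of t] by simp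
  qed
  moreover have "N (w t) \<le> inverse (real (Suc t))" for t
  proof -
    have "N (w t) = N (w0 t) / l1 (w0 t)" unfolding w_def
      using vnorm_smult[OF N w0(1)] l1_pos[of t] by (simp add: norm_divide)
    then have "N (w t) * real (Suc t) < 1"
      using w0(2)[of t] l1_pos[of t] by (simp add: mult.commute)
    then show ?thesis by (simp add: pos_le_divide_eq inverse_eq_divide del: of_nat_Suc)
  qed
  then have "(\<lambda>t. N (w t)) \<longlonglongrightarrow> 0" using vnorm_nonneg[OF N w]
    by (intro tendsto_sandwich[OF _ _ tendsto_const LIMSEQ_inverse_real_of_nat]) auto
  ultimately show False using vnorm_l1_sphere_not_null[of d N w] N w unfolding l1_def by blast
qed

lemma mult_mat_vec_index_sum:
  assumes "A \<in> carrier_mat r c" and "v \<in> carrier_vec c" and "k < r"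
  shows "(A *\<^sub>v v) $ k = (\<Sum>l<c. A $$ (k, l) * v $ l)"
  using assms by (auto simp: scalar_prod_def lessThan_atLeast0 intro!: sum.cong)

lemma mult_mat_vec_index_bound:
  assumes A: "A \<in> carrier_mat r c" and v: "v \<in> carrier_vec c" and k: "k < r"
  shows "cmod ((A *\<^sub>v v) $ k) \<le> (\<Sum>l<c. cmod (A $$ (k, l))) * (\<Sum>l<c. cmod (v $ l))"
proof -
  have "cmod ((A *\<^sub>v v) $ k) \<le> (\<Sum>l<c. cmod (A $$ (k, l)) * cmod (v $ l))"
    unfolding mult_mat_vec_index_sum[OF A v k] by (rule order.trans[OF norm_sum]) (simp add: norm_mult)
  also have "\<dots> \<le> (\<Sum>l<c. cmod (A $$ (k, l)) * (\<Sum>l<c. cmod (v $ l)))"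
    by (intro sum_mono mult_left_mono member_le_sum) auto
  finally show ?thesis by (simp add: sum_distrib_right)
qed

lemma mult_mat_vec_index_sum_family:
  fixes A :: "complex mat"
  assumes A: "A \<in> carrier_mat r c" and v: "v \<in> carrier_vec c" and k: "k < r"
    and W: "\<And>j. j \<in> J \<Longrightarrow> W j \<in> carrier_vec c"
    and v_eq: "\<And>q. q < c \<Longrightarrow> v $ q = (\<Sum>j\<in>J. a j * W j $ q)"
  shows "(A *\<^sub>v v) $ k = (\<Sum>j\<in>J. a j * (A *\<^sub>v W j) $ k)"
proof -
  have "(A *\<^sub>v v) $ k = (\<Sum>l<c. \<Sum>j\<in>J. a j * (A $$ (k, l) * W j $ l))"
    unfolding mult_mat_vec_index_sum[OF A v k] using v_eq
    by (simp add: sum_distrib_left algebra_simps)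
  also have "\<dots> = (\<Sum>j\<in>J. a j * (A *\<^sub>v W j) $ k)"
    by (subst sum.swap) (simp add: mult_mat_vec_index_sum[OF A W k] sum_distrib_left)
  finally show ?thesis .
qed

text \<open>Without boundedness op_norm would be the junk value of Sup on an unbounded set.\<close>
lemma bdd_above_op_norm:
  assumes N: "is_vnorm d N" and A: "A \<in> carrier_mat d d"
  shows "bdd_above ((\<lambda>v. N (A *\<^sub>v v)) ` {v \<in> carrier_vec d. N v = 1})"
proof -
  obtain c where c: "\<forall>v\<in>carrier_vec d. (\<Sum>k<d. cmod (v $ k)) \<le> c * N v"
    using vnorm_dominates_l1[OF N] by blast
  define K where "K = (\<Sum>k<d. (\<Sum>l<d. cmod (A $$ (k, l))) * c * N (unit_vec d k))"
  have "N (A *\<^sub>v v) \<le> K" if v: "v \<in> carrier_vec d" "N v = 1" for v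
  proof -
    have "N (A *\<^sub>v v) \<le> (\<Sum>k<d. cmod ((A *\<^sub>v v) $ k) * N (unit_vec d k))"
      by (rule vnorm_le_sum_unit_vec[OF N]) (use A v in simp)
    also have "\<dots> \<le> K" unfolding K_def
    proof (intro sum_mono mult_right_mono)
      fix k assume "k \<in> {..<d}"
      then have "cmod ((A *\<^sub>v v) $ k) \<le> (\<Sum>l<d. cmod (A $$ (k, l))) * (\<Sum>l<d. cmod (v $ l))"
        using mult_mat_vec_index_bound[OF A v(1)] by simp
      also have "\<dots> \<le> (\<Sum>l<d. cmod (A $$ (k, l))) * c"
        using c v by (intro mult_left_mono) (auto intro: sum_nonneg)
      finally show "cmod ((A *\<^sub>v v) $ k) \<le> (\<Sum>l<d. cmod (A $$ (k, l))) * c" .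
      show "0 \<le> N (unit_vec d k)" by (rule vnorm_nonneg[OF N]) simp
    qed
    finally show ?thesis .
  qed
  then show ?thesis by (intro bdd_aboveI[of _ K]) auto
qed

lemma eigenvalue_norm_le_op_norm:
  assumes N: "is_vnorm d N" and A: "A \<in> carrier_mat d d" and ev: "eigenvector A u l"
  shows "cmod l \<le> op_norm d N A"
proof -
  have u: "u \<in> carrier_vec d" "u \<noteq> 0\<^sub>v d" "A *\<^sub>v u = l \<cdot>\<^sub>v u"
    using ev A unfolding eigenvector_def by auto
  define u' where "u' = complex_of_real (1 / N u) \<cdot>\<^sub>v u"
  have "0 < N u" using vnorm_pos[OF N u(1,2)] .
  then have u': "u' \<in> carrier_vec d" "N u' = 1"
    unfolding u'_def using vnorm_smult[OF N u(1)] u(1) by (auto simp: norm_divide)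
  have "A *\<^sub>v u' = l \<cdot>\<^sub>v u'"
    unfolding u'_def using A u by (auto simp: mult_mat_vec smult_smult_assoc mult.commute)
  then have "N (A *\<^sub>v u') = cmod l" using u' vnorm_smult[OF N u'(1)] by simp
  then have "cmod l \<in> (\<lambda>v. N (A *\<^sub>v v)) ` {v \<in> carrier_vec d. N v = 1}"
    using u' by force
  then show ?thesis unfolding op_norm_def by (rule cSup_upper[OF _ bdd_above_op_norm[OF N A]])
qed

section \<open>Diagonalization and Sylvester equations\<close>

lemma minv_mat:
  assumes A: "A \<in> carrier_mat m m" and inv: "invertible_mat A"
  shows "minv m A \<in> carrier_mat m m" "A * minv m A = 1\<^sub>m m" "minv m A * A = 1\<^sub>m m"
proof -
  obtain B where B: "A * B = 1\<^sub>m m" "B * A = 1\<^sub>m (dim_row B)"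
    using inv A unfolding invertible_mat_def inverts_mat_def by auto
  have "B \<in> carrier_mat m m"
    using arg_cong[OF B(1), of dim_col] arg_cong[OF B(2), of dim_col] A by auto
  with B have "\<exists>B. B \<in> carrier_mat m m \<and> A * B = 1\<^sub>m m \<and> B * A = 1\<^sub>m m" by auto
  then have "minv m A \<in> carrier_mat m m \<and> A * minv m A = 1\<^sub>m m \<and> minv m A * A = 1\<^sub>m m"
    unfolding minv_def by (rule someI_ex)
  then show "minv m A \<in> carrier_mat m m" "A * minv m A = 1\<^sub>m m" "minv m A * A = 1\<^sub>m m" by auto
qed

lemma eigenvalue_nonzero_if_invertible:
  fixes A :: "complex mat"
  assumes A: "A \<in> carrier_mat m m" and inv: "invertible_mat A" and ev: "eigenvector A v l"
  shows "l \<noteq> 0"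
proof
  assume "l = 0"
  with ev A have v: "v \<in> carrier_vec m" "v \<noteq> 0\<^sub>v m" "A *\<^sub>v v = 0\<^sub>v m"
    unfolding eigenvector_def by auto
  have "v = (minv m A * A) *\<^sub>v v" using minv_mat[OF A inv] v by simp
  also have "\<dots> = minv m A *\<^sub>v (A *\<^sub>v v)" by (rule assoc_mult_mat_vec[OF minv_mat(1)[OF A inv] A v(1)])
  also have "\<dots> = 0\<^sub>v m" unfolding v(3) using minv_mat(1)[OF A inv] by (intro eq_vecI) auto
  finally show False using v by simp
qed

lemma diag_of_carrier[simp]: "diag_of m f \<in> carrier_mat m m"
  unfolding diag_of_def by simp

lemma diag_of_dim[simp]: "dim_row (diag_of m f) = m" "dim_col (diag_of m f) = m"
  unfolding diag_of_def by simp_all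

lemma diag_of_mult_index:
  assumes X: "X \<in> carrier_mat r c" and l: "l < r" and m: "m < c"
  shows "(diag_of r f * X) $$ (l, m) = f l * X $$ (l, m)"
proof -
  have "(diag_of r f * X) $$ (l, m) = (\<Sum>i = 0..<r. (if l = i then f l else 0) * X $$ (i, m))"
    using X l m by (auto simp: scalar_prod_def diag_of_def intro!: sum.cong)
  also have "\<dots> = (\<Sum>i\<in>{0..<r}. if i = l then f l * X $$ (l, m) else 0)"
    by (rule sum.cong) auto
  finally show ?thesis using l by simp
qed

lemma mult_diag_of_index:
  assumes X: "X \<in> carrier_mat r c" and l: "l < r" and m: "m < c"
  shows "(X * diag_of c f) $$ (l, m) = X $$ (l, m) * f m"
proof -
  have "(X * diag_of c f) $$ (l, m) = (\<Sum>i = 0..<c. X $$ (l, i) * (if i = m then f i else 0))"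
    using X l m by (auto simp: scalar_prod_def diag_of_def intro!: sum.cong)
  also have "\<dots> = (\<Sum>i\<in>{0..<c}. if i = m then X $$ (l, m) * f m else 0)"
    by (rule sum.cong) auto
  finally show ?thesis using m by simp
qed

lemma diag_of_mult_vec:
  assumes z: "z \<in> carrier_vec m"
  shows "diag_of m f *\<^sub>v z = vec m (\<lambda>k. f k * z $ k)"
proof (rule eq_vecI)
  fix k assume "k < dim_vec (vec m (\<lambda>k. f k * z $ k))"
  then have k: "k < m" by simp
  have "(diag_of m f *\<^sub>v z) $ k = (\<Sum>l<m. if l = k then f k * z $ k else 0)"
    unfolding mult_mat_vec_index_sum[OF diag_of_carrier z k] using k
    by (intro sum.cong) (auto simp: diag_of_def)
  then show "(diag_of m f *\<^sub>v z) $ k = vec m (\<lambda>k. f k * z $ k) $ k" using k by simp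
qed simp

lemma diagonalization_eigenvector:
  assumes L: "L \<in> carrier_mat m m" and V: "V \<in> carrier_mat m m" "invertible_mat V"
    and LV: "L * V = V * diag_of m f" and l: "l < m"
  shows "eigenvector L (col V l) (f l)"
proof -
  have "L *\<^sub>v col V l = col (V * diag_of m f) l" using LV L V l by (metis col_mult2)
  also have "\<dots> = f l \<cdot>\<^sub>v col V l"
  proof (rule eq_vecI)
    fix i assume "i < dim_vec (f l \<cdot>\<^sub>v col V l)"
    then have i: "i < m" using V by simp
    have "col (V * diag_of m f) l $ i = (V * diag_of m f) $$ (i, l)"
      by (rule index_col) (use V l i in auto)
    then show "col (V * diag_of m f) l $ i = (f l \<cdot>\<^sub>v col V l) $ i"
      using mult_diag_of_index[OF V(1) i l] V i l by simp
  qed (use V in simp)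
  finally have ev: "L *\<^sub>v col V l = f l \<cdot>\<^sub>v col V l" .
  have "col V l \<noteq> 0\<^sub>v m"
  proof
    assume zero: "col V l = 0\<^sub>v m"
    have "unit_vec m l = col (minv m V * V) l" using minv_mat[OF V] l by simp
    also have "\<dots> = minv m V *\<^sub>v col V l" using col_mult2[OF minv_mat(1)[OF V] V(1) l] .
    also have "\<dots> = 0\<^sub>v m" unfolding zero using minv_mat(1)[OF V] by (intro eq_vecI) auto
    finally show False using arg_cong[of _ _ "\<lambda>v. v $ l"] l by fastforce
  qed
  then show ?thesis unfolding eigenvector_def using ev L V l by simp
qed

lemma mult_mat_inverse_cancel:
  fixes A B Y :: "'a :: semiring_1 mat"
  assumes "A \<in> carrier_mat n n" and "B \<in> carrier_mat n n" and "A * B = 1\<^sub>m n" and "dim_row Y = n"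
  shows "A * (B * Y) = Y"
proof -
  have "A * (B * Y) = (A * B) * Y"
    using assms by (intro assoc_mult_mat[symmetric, of _ n n _ n _ "dim_col Y"]) auto
  then show ?thesis using assms by simp
qed

lemma mult_mat_assoc_dim:
  "dim_col A = dim_row B \<Longrightarrow> dim_col B = dim_row C \<Longrightarrow> A * B * C = A * (B * C)"
  by (rule assoc_mult_mat[of A "dim_row A" "dim_col A" B "dim_col B" C "dim_col C"]) auto

lemma invertible_mult_left_cancel:
  fixes A X Y :: "complex mat"
  assumes A: "A \<in> carrier_mat n n" "invertible_mat A"
    and X: "dim_row X = n" and Y: "dim_row Y = n" and eq: "A * X = A * Y"
  shows "X = Y"
proof -
  have "X = minv n A * (A * X)"
    by (rule mult_mat_inverse_cancel[OF minv_mat(1)[OF A] A(1) minv_mat(3)[OF A] X, symmetric])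
  also have "\<dots> = Y" unfolding eq by (rule mult_mat_inverse_cancel[OF minv_mat(1)[OF A] A(1) minv_mat(3)[OF A] Y])
  finally show ?thesis .
qed

lemma minv_mult_of_diagonalized:
  fixes L V \<Lambda> :: "complex mat"
  assumes L: "L \<in> carrier_mat m m" and V: "V \<in> carrier_mat m m" "invertible_mat V"
    and \<Lambda>: "\<Lambda> \<in> carrier_mat m m" and LV: "L * V = V * \<Lambda>"
  shows "minv m V * L = \<Lambda> * minv m V"
proof -
  note Q = minv_mat[OF V]
  have "minv m V * L = minv m V * (L * V * minv m V)" using assoc_mult_mat[OF L V(1) Q(1)] L Q by simp
  also have "\<dots> = minv m V * (L * V) * minv m V"
    by (rule assoc_mult_mat[OF Q(1) mult_carrier_mat[OF L V(1)] Q(1), symmetric])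
  also have "\<dots> = \<Lambda> * minv m V" unfolding LV
    using mult_mat_inverse_cancel[OF Q(1) V(1) Q(3)] \<Lambda> V Q
    by (simp add: assoc_mult_mat[OF Q(1) mult_carrier_mat[OF V(1) \<Lambda>] Q(1)])
  finally show ?thesis .
qed

lemma diag_of_sylvester:
  fixes a b :: "nat \<Rightarrow> complex"
  assumes M: "M \<in> carrier_mat r c"
    and a: "\<And>l. l < r \<Longrightarrow> a l \<noteq> 0" and ab: "\<And>l m. l < r \<Longrightarrow> m < c \<Longrightarrow> a l \<noteq> b m"
  defines "X \<equiv> mat r c (\<lambda>(l, m). M $$ (l, m) * inverse (1 - b m / a l))"
  shows "diag_of r a * X = X * diag_of c b + diag_of r a * M"
proof (rule eq_matI)
  have X: "X \<in> carrier_mat r c" unfolding X_def by simp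
  fix l m assume "l < dim_row (X * diag_of c b + diag_of r a * M)"
    and "m < dim_col (X * diag_of c b + diag_of r a * M)"
  then have l: "l < r" and m: "m < c" using M by auto
  have "1 - b m / a l = (a l - b m) / a l" using a[OF l] by (simp add: field_simps)
  moreover have "a l - b m \<noteq> 0" using ab[OF l m] by simp
  ultimately have "a l * (M $$ (l, m) * inverse (1 - b m / a l))
      = M $$ (l, m) * inverse (1 - b m / a l) * b m + a l * M $$ (l, m)"
    using a[OF l] by (simp add: field_simps)
  then show "(diag_of r a * X) $$ (l, m) = (X * diag_of c b + diag_of r a * M) $$ (l, m)"
    using diag_of_mult_index[OF X l m] mult_diag_of_index[OF X l m] diag_of_mult_index[OF M l m] X M l m
    by (simp add: X_def)
qed (use M in \<open>auto simp: X_def\<close>)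

text \<open>The recursion defining D_(i,j) has exactly this shape, with B = C_i D_(i-1,j).\<close>
lemma sylvester_of_diagonalized:
  fixes L1 L2 V1 V2 \<Lambda>1 \<Lambda>2 X B :: "complex mat"
  assumes L1: "L1 \<in> carrier_mat r r" "invertible_mat L1"
    and V1: "V1 \<in> carrier_mat r r" "invertible_mat V1" and \<Lambda>1: "\<Lambda>1 \<in> carrier_mat r r"
    and LV1: "L1 * V1 = V1 * \<Lambda>1"
    and L2: "L2 \<in> carrier_mat c c"
    and V2: "V2 \<in> carrier_mat c c" "invertible_mat V2" and \<Lambda>2: "\<Lambda>2 \<in> carrier_mat c c"
    and LV2: "L2 * V2 = V2 * \<Lambda>2"
    and B: "B \<in> carrier_mat r c" and X: "X \<in> carrier_mat r c"
    and sylv: "\<Lambda>1 * X = X * \<Lambda>2 + \<Lambda>1 * (minv r V1 * B * V2)"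
  shows "L1 * (minv r L1 * V1 * X * minv c V2) = (minv r L1 * V1 * X * minv c V2) * L2 + B"
proof -
  define Li Q1 Q2 where "Li = minv r L1" and "Q1 = minv r V1" and "Q2 = minv c V2"
  note Li = minv_mat[OF L1, folded Li_def] and Q1 = minv_mat[OF V1, folded Q1_def]
    and Q2 = minv_mat[OF V2, folded Q2_def]
  note cancel = mult_mat_inverse_cancel[OF L1(1) Li(1,2)] mult_mat_inverse_cancel[OF V1(1) Q1(1,2)]
  note carriers = L1(1) V1(1) \<Lambda>1 L2 V2(1) \<Lambda>2 B X Li(1) Q1(1) Q2(1)
  define D where "D = Li * V1 * X * Q2"
  define M where "M = Q1 * B * V2"
  have M: "M \<in> carrier_mat r c" unfolding M_def using carriers by simp
  have sylv': "\<Lambda>1 * X = X * \<Lambda>2 + \<Lambda>1 * M" using sylv unfolding M_def Q1_def .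
  have B_eq: "B = V1 * (M * Q2)" unfolding M_def
    using carriers cancel Q2(2) by (simp add: assoc_mult_mat[OF Q1(1) mult_carrier_mat[OF B V2(1)] Q2(1)])
  have L1V1: "L1 * (V1 * Y) = V1 * (\<Lambda>1 * Y)" if "dim_row Y = r" for Y
  proof -
    have Y: "Y \<in> carrier_mat r (dim_col Y)" using that by auto
    have "L1 * (V1 * Y) = (L1 * V1) * Y" using L1(1) V1(1) Y by simp
    also have "\<dots> = V1 * (\<Lambda>1 * Y)" unfolding LV1 using V1(1) \<Lambda>1 Y by simp
    finally show ?thesis .
  qed
  have Q2L2: "Q2 * L2 = \<Lambda>2 * Q2"
    unfolding Q2_def by (rule minv_mult_of_diagonalized[OF L2 V2 \<Lambda>2 LV2])
  have LD: "L1 * D = V1 * (X * Q2)" unfolding D_def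
    using carriers cancel by (simp add: assoc_mult_mat[OF Li(1) mult_carrier_mat[OF V1(1) X] Q2(1)])
  have D: "D \<in> carrier_mat r c" unfolding D_def
    using mult_carrier_mat[OF mult_carrier_mat[OF mult_carrier_mat[OF Li(1) V1(1)] X] Q2(1)] .
  have "L1 * (D * L2 + B) = L1 * (D * L2) + L1 * B"
    using D L2 B by (intro mult_add_distrib_mat[OF L1(1)]) auto
  also have "L1 * (D * L2) = V1 * (X * (Q2 * L2))"
    unfolding assoc_mult_mat[OF L1(1) D L2, symmetric] LD
    using carriers by (simp add: mult_mat_assoc_dim carrier_matD)
  also have "\<dots> = V1 * (X * (\<Lambda>2 * Q2))" unfolding Q2L2 ..
  also have "L1 * B = V1 * (\<Lambda>1 * (M * Q2))" unfolding B_eq using M carriers by (simp add: L1V1)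
  also have "V1 * (X * (\<Lambda>2 * Q2)) + V1 * (\<Lambda>1 * (M * Q2)) = V1 * (X * (\<Lambda>2 * Q2) + \<Lambda>1 * (M * Q2))"
    using mult_add_distrib_mat[OF V1(1) mult_carrier_mat[OF X mult_carrier_mat[OF \<Lambda>2 Q2(1)]]
        mult_carrier_mat[OF \<Lambda>1 mult_carrier_mat[OF M Q2(1)]]] by simp
  also have "\<dots> = V1 * ((X * \<Lambda>2 + \<Lambda>1 * M) * Q2)"
    using carriers M add_mult_distrib_mat[of "X * \<Lambda>2" r c "\<Lambda>1 * M" Q2 c]
    by (simp add: mult_mat_assoc_dim carrier_matD)
  also have "\<dots> = L1 * (L1 * D)"
    unfolding sylv'[symmetric] LD using M carriers by (simp add: L1V1)
  finally have L1_eq: "L1 * (D * L2 + B) = L1 * (L1 * D)" .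
  have "D * L2 + B = L1 * D"
    by (rule invertible_mult_left_cancel[OF L1 _ _ L1_eq]) (use D L2 B L1(1) in auto)
  then show ?thesis unfolding D_def Li_def Q2_def by simp
qed

lemma funpow_mult_mat_vec_diagonalized:
  assumes L: "L \<in> carrier_mat m m" and V: "V \<in> carrier_mat m m"
    and LV: "L * V = V * diag_of m f" and w: "w \<in> carrier_vec m"
  shows "((\<lambda>v. L *\<^sub>v v) ^^ t) (V *\<^sub>v w) = V *\<^sub>v vec m (\<lambda>k. f k ^ t * w $ k)"
proof (induction t)
  case 0
  have "vec m (\<lambda>k. f k ^ 0 * w $ k) = w" using w by auto
  then show ?case by simp
next
  case (Suc t)
  define z where "z = vec m (\<lambda>k. f k ^ t * w $ k)"
  have z: "z \<in> carrier_vec m" unfolding z_def by simp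
  have "L *\<^sub>v (V *\<^sub>v z) = (V * diag_of m f) *\<^sub>v z" using L V z LV by (simp flip: assoc_mult_mat_vec)
  also have "\<dots> = V *\<^sub>v (diag_of m f *\<^sub>v z)" by (rule assoc_mult_mat_vec[OF V diag_of_carrier z])
  also have "diag_of m f *\<^sub>v z = vec m (\<lambda>k. f k ^ Suc t * w $ k)"
    unfolding diag_of_mult_vec[OF z] by (intro eq_vecI) (auto simp: z_def)
  finally show ?case using Suc by (simp add: z_def)
qed

section \<open>The block bidiagonal system\<close>

lemma pert_list_length: "length (pert_list d L C V lam x k) = k"
  by (induction k) (auto simp: Let_def)

lemma nth_append_length_eq: "length xs = k \<Longrightarrow> (xs @ [x]) ! k = x"
  by (metis nth_append_length)

lemma pert_list_nth_stable:
  "1 \<le> j \<Longrightarrow> j \<le> k \<Longrightarrow> pert_list d L C V lam x k ! (j - 1) = pert_list d L C V lam x j ! (j - 1)"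
proof (induction k)
  case (Suc k)
  show ?case
  proof (cases "j = Suc k")
    case False
    then have "j \<le> k" using Suc by simp
    then have "j - 1 < length (pert_list d L C V lam x k)" using Suc(2) by (simp add: pert_list_length)
    then show ?thesis using Suc \<open>j \<le> k\<close> by (simp add: Let_def nth_append)
  qed simp
qed simp

definition pert_block :: "(nat \<Rightarrow> nat) \<Rightarrow> (nat \<Rightarrow> complex mat) \<Rightarrow> (nat \<Rightarrow> complex mat)
    \<Rightarrow> (nat \<Rightarrow> complex mat) \<Rightarrow> (nat \<Rightarrow> nat \<Rightarrow> complex) \<Rightarrow> (nat \<Rightarrow> complex vec) \<Rightarrow> nat \<Rightarrow> complex vec"
  where "pert_block d L C V lam x j = pert_list d L C V lam x j ! (j - 1)"

lemma pert_block_rec: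
  assumes "1 \<le> i"
  shows "pert_block d L C V lam x i = x i + vec (d i) (\<lambda>q. \<Sum>j\<in>{1..<i}.
    (-1) ^ (i - 1 - j) * (Dm d L C V lam i j *\<^sub>v pert_block d L C V lam x j) $ q)"
proof -
  obtain k where k: "i = Suc k" using assms by (cases i) auto
  have stable: "pert_list d L C V lam x k ! (j - 1) = pert_block d L C V lam x j" if "j \<in> {1..<i}" for j
    using pert_list_nth_stable[of j k] that k unfolding pert_block_def by auto
  have "pert_block d L C V lam x i = x i + vec (d i) (\<lambda>q. \<Sum>j\<in>{1..<i}.
      (-1) ^ (i - 1 - j) * (Dm d L C V lam i j *\<^sub>v pert_list d L C V lam x k ! (j - 1)) $ q)"
    unfolding pert_block_def k
    by (simp only: pert_list.simps Let_def diff_Suc_1) (rule nth_append_length_eq[OF pert_list_length])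
  also have "\<dots> = x i + vec (d i) (\<lambda>q. \<Sum>j\<in>{1..<i}.
      (-1) ^ (i - 1 - j) * (Dm d L C V lam i j *\<^sub>v pert_block d L C V lam x j) $ q)"
    by (intro arg_cong2[where f = "(+)"] ext arg_cong2[where f = vec] sum.cong refl) (simp only: stable)
  finally show ?thesis .
qed

lemma pert_block_carrier: "1 \<le> i \<Longrightarrow> pert_block d L C V lam x i \<in> carrier_vec (d i)"
  unfolding carrier_vec_def by (subst pert_block_rec) auto

lemma pert_eq_pert_block: "i \<in> {1..n} \<Longrightarrow> pert n d L C V lam x i = pert_block d L C V lam x i"
  unfolding pert_def pert_block_def by simp

lemma pert_prodsp: "pert n d L C V lam x \<in> prodsp n d"
  unfolding prodsp_def using pert_eq_pert_block[of _ n d L C V lam x] pert_block_carrier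
  by (auto simp: pert_def)

lemma Nom_prodsp:
  assumes "\<forall>i\<in>{1..n}. L i \<in> carrier_mat (d i) (d i)" and "x \<in> prodsp n d"
  shows "Nom n L x \<in> prodsp n d"
  using assms unfolding prodsp_def Nom_def by auto

lemma funpow_Nom: "i \<in> {1..n} \<Longrightarrow> (Nom n L ^^ t) x i = ((\<lambda>v. L i *\<^sub>v v) ^^ t) (x i)"
  by (induction t) (auto simp: Nom_def)

lemma NonLin_prodsp:
  assumes Ldim: "\<forall>i\<in>{1..n}. L i \<in> carrier_mat (d i) (d i)"
    and N1map: "\<forall>v\<in>carrier_vec (d 1). N1 v \<in> carrier_vec (d 1)"
    and Nmap: "\<forall>i\<in>{2..n}. \<forall>u\<in>carrier_vec (d (i - 1)). \<forall>v\<in>carrier_vec (d i). N i u v \<in> carrier_vec (d i)"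
    and x: "x \<in> prodsp n d"
  shows "NonLin n L C N1 N x \<in> prodsp n d"
proof -
  have xi: "x i \<in> carrier_vec (d i)" if "i \<in> {1..n}" for i using x that unfolding prodsp_def by simp
  have A: "NonLin n L C N1 N x i \<in> carrier_vec (d i)" if i: "i \<in> {1..n}" for i
  proof (cases "i = 1")
    case True
    then have e: "NonLin n L C N1 N x i = L 1 *\<^sub>v x 1 + N1 (x 1)" using i unfolding NonLin_def by simp
    have "N1 (x 1) \<in> carrier_vec (d 1)" using N1map xi[OF i] True by simp
    then have "dim_vec (L 1 *\<^sub>v x 1 + N1 (x 1)) = d 1" by simp
    then show ?thesis unfolding e carrier_vec_def using True by simp
  next
    case False
    then have i2: "i \<in> {2..n}" and im: "i - 1 \<in> {1..n}" using i by auto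
    have e: "NonLin n L C N1 N x i = L i *\<^sub>v x i + C i *\<^sub>v x (i - 1) + N i (x (i - 1)) (x i)"
      using i False unfolding NonLin_def by simp
    have "N i (x (i - 1)) (x i) \<in> carrier_vec (d i)" using bspec[OF Nmap i2] xi[OF i] xi[OF im] by simp
    then have "dim_vec (L i *\<^sub>v x i + C i *\<^sub>v x (i - 1) + N i (x (i - 1)) (x i)) = d i" by simp
    then show ?thesis unfolding e carrier_vec_def by simp
  qed
  have B: "\<forall>i. i \<notin> {1..n} \<longrightarrow> NonLin n L C N1 N x i = 0\<^sub>v 0" unfolding NonLin_def by simp
  show ?thesis unfolding prodsp_def using A B by blast
qed

lemma funpow_intertwine:
  assumes F: "\<And>x. x \<in> S \<Longrightarrow> F x \<in> S" and h: "\<And>x. x \<in> S \<Longrightarrow> h (F x) = G (h x)" and x: "x \<in> S"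
  shows "(G ^^ t) (h x) = h ((F ^^ t) x)"
proof (induction t)
  case (Suc t)
  have "(F ^^ t) x \<in> S" using x F by (induction t) auto
  then show ?case using Suc h by simp
qed simp

lemma power_sum_div_power_tendsto_zero:
  fixes c z :: "'a \<Rightarrow> complex" and \<rho> :: real
  assumes A: "finite A" and z: "\<And>a. a \<in> A \<Longrightarrow> cmod (z a) < \<rho>"
  shows "(\<lambda>t. cmod (\<Sum>a\<in>A. c a * z a ^ t) / \<rho> ^ t) \<longlonglongrightarrow> 0"
proof (cases "A = {}")
  case False
  then obtain a where "a \<in> A" by blast
  then have \<rho>: "0 < \<rho>" using z[of a] norm_ge_zero[of "z a"] by linarith
  have "(\<lambda>t. \<Sum>a\<in>A. c a * (z a / of_real \<rho>) ^ t) \<longlonglongrightarrow> 0"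
  proof (intro tendsto_null_sum)
    fix a assume "a \<in> A"
    then have "cmod (z a / of_real \<rho>) < 1" using z \<rho> by (simp add: norm_divide)
    then show "(\<lambda>t. c a * (z a / of_real \<rho>) ^ t) \<longlonglongrightarrow> 0"
      using tendsto_mult_right_zero LIMSEQ_power_zero by blast
  qed
  then have "(\<lambda>t. cmod (\<Sum>a\<in>A. c a * (z a / of_real \<rho>) ^ t)) \<longlonglongrightarrow> 0"
    by (rule tendsto_norm_zero)
  moreover have "cmod (\<Sum>a\<in>A. c a * (z a / of_real \<rho>) ^ t) = cmod (\<Sum>a\<in>A. c a * z a ^ t) / \<rho> ^ t" for t
    using \<rho> by (simp add: power_divide sum_divide_distrib[symmetric] norm_divide norm_power)
  ultimately show ?thesis by simp
qed simp

lemma minus_one_power_diff: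
  "j < i \<Longrightarrow> (-1 :: 'a :: ring_1) ^ (i - j) = - ((-1) ^ (i - 1 - j))"
  by (simp add: Suc_diff_Suc[symmetric])

lemma step_less_imp_less:
  fixes f :: "nat \<Rightarrow> real"
  assumes step: "\<forall>k\<in>{1..<n}. f k < f (Suc k)" and "1 \<le> j" "j < i" "i \<le> n"
  shows "f j < f i"
  using assms(2-)
proof (induction i)
  case (Suc i)
  have "f i < f (Suc i)" using step Suc.prems by auto
  then show ?case using Suc by (cases "j = i") auto
qed simp

locale bidiagonal_system =
  fixes n :: nat and d :: "nat \<Rightarrow> nat" and L C V :: "nat \<Rightarrow> complex mat"
    and lam :: "nat \<Rightarrow> nat \<Rightarrow> complex"
  assumes Ldim: "\<forall>i\<in>{1..n}. L i \<in> carrier_mat (d i) (d i)"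
    and Cdim: "\<forall>i\<in>{2..n}. C i \<in> carrier_mat (d i) (d (i - 1))"
    and Linv: "\<forall>i\<in>{1..n}. invertible_mat (L i)"
    and Vdim: "\<forall>i\<in>{1..n}. V i \<in> carrier_mat (d i) (d i)"
    and Vinv: "\<forall>i\<in>{1..n}. invertible_mat (V i)"
    and diagz: "\<forall>i\<in>{1..n}. L i * V i = V i * diag_of (d i) (lam i)"
    and disj: "\<forall>i\<in>{1..n}. \<forall>j\<in>{1..n}. i \<noteq> j \<longrightarrow> spectrum (L i) \<inter> spectrum (L j) = {}"
begin

abbreviation "Vi i \<equiv> minv (d i) (V i)"
abbreviation "D i j \<equiv> Dm d L C V lam i j"
abbreviation "P x j \<equiv> pert_block d L C V lam x j"
abbreviation "U x j t \<equiv> ((\<lambda>v. L j *\<^sub>v v) ^^ t) (P x j)"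

lemma block_mats:
  assumes "i \<in> {1..n}"
  shows "L i \<in> carrier_mat (d i) (d i)" "V i \<in> carrier_mat (d i) (d i)"
    "invertible_mat (L i)" "invertible_mat (V i)"
    "Vi i \<in> carrier_mat (d i) (d i)" "V i * Vi i = 1\<^sub>m (d i)"
    "L i * V i = V i * diag_of (d i) (lam i)"
  using assms Ldim Vdim Linv Vinv diagz minv_mat by auto

lemma lam_eigenvector:
  assumes i: "i \<in> {1..n}" and l: "l < d i"
  shows "eigenvector (L i) (col (V i) l) (lam i l)"
  using diagonalization_eigenvector[OF block_mats(1,2,4,7)[OF i] l] .

lemma lam_nonzero:
  assumes i: "i \<in> {1..n}" and l: "l < d i"
  shows "lam i l \<noteq> 0"
  using eigenvalue_nonzero_if_invertible[OF block_mats(1,3)[OF i] lam_eigenvector[OF i l]] .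

lemma lam_distinct:
  assumes "i \<in> {1..n}" "j \<in> {1..n}" "i \<noteq> j" "l < d i" "m < d j"
  shows "lam i l \<noteq> lam j m"
proof
  assume "lam i l = lam j m"
  then have "lam i l \<in> spectrum (L i) \<inter> spectrum (L j)"
    using lam_eigenvector[of i l] lam_eigenvector[of j m] assms
    unfolding spectrum_def eigenvalue_def by auto
  then show False using disj assms by blast
qed

lemma Dm_carrier:
  assumes "1 \<le> j" "j \<le> i" "i \<le> n"
  shows "D i j \<in> carrier_mat (d i) (d j)"
proof (cases "j = i")
  case True
  then show ?thesis by (cases i) auto
next
  case False
  then obtain k where "i = Suc k" using assms by (cases i) auto
  then show ?thesis using False block_mats[of i] block_mats[of j] minv_mat[of "L i" "d i"] assms
    by (auto simp: Let_def)
qed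

lemma Dm_sylvester:
  assumes ji: "1 \<le> j" "j < i" "i \<le> n"
  shows "L i * D i j = D i j * L j + C i * D (i - 1) j"
proof -
  obtain k where k: "i = Suc k" using ji by (cases i) auto
  have i: "i \<in> {1..n}" and j: "j \<in> {1..n}" using ji by auto
  have "i \<in> {2..n}" using ji by auto
  then have Ci: "C i \<in> carrier_mat (d i) (d k)" using bspec[OF Cdim] k by fastforce
  have Dk: "D k j \<in> carrier_mat (d k) (d j)" using Dm_carrier[of j k] ji k by auto
  define M where "M = Vi i * C i * D k j * V j"
  define X where "X = mat (d i) (d j) (\<lambda>(l, m). M $$ (l, m) * inverse (1 - lam j m / lam i l))"
  have M: "M \<in> carrier_mat (d i) (d j)" unfolding M_def using block_mats[OF i] block_mats[OF j] Ci Dk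
    by (meson mult_carrier_mat)
  have "diag_of (d i) (lam i) * X = X * diag_of (d j) (lam j) + diag_of (d i) (lam i) * M"
    unfolding X_def using lam_nonzero[OF i] lam_distinct[OF i j] ji
    by (intro diag_of_sylvester[OF M]) auto
  moreover have "M = Vi i * (C i * D k j) * V j"
    unfolding M_def using block_mats[OF i] Ci Dk by (simp add: mult_mat_assoc_dim carrier_matD)
  ultimately have "L i * (minv (d i) (L i) * V i * X * Vi j)
      = (minv (d i) (L i) * V i * X * Vi j) * L j + C i * D k j"
    using block_mats[OF i] block_mats[OF j] Ci Dk
    by (intro sylvester_of_diagonalized) (auto simp: X_def)
  moreover have "D i j = minv (d i) (L i) * V i * X * Vi j"
    using ji k unfolding M_def X_def by (simp add: Let_def)
  ultimately show ?thesis using k by simp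
qed

lemma Dm_sylvester_index:
  assumes ji: "1 \<le> j" "j < i" "i \<le> n" and u: "u \<in> carrier_vec (d j)" and q: "q < d i"
  shows "(L i *\<^sub>v (D i j *\<^sub>v u)) $ q = (D i j *\<^sub>v (L j *\<^sub>v u)) $ q + (C i *\<^sub>v (D (i - 1) j *\<^sub>v u)) $ q"
proof -
  have i: "i \<in> {1..n}" and j: "j \<in> {1..n}" using ji by auto
  have Ci: "C i \<in> carrier_mat (d i) (d (i - 1))" using Cdim ji by auto
  have Dij: "D i j \<in> carrier_mat (d i) (d j)" and Dij': "D (i - 1) j \<in> carrier_mat (d (i - 1)) (d j)"
    using Dm_carrier[of j i] Dm_carrier[of j "i - 1"] ji by auto
  have "L i *\<^sub>v (D i j *\<^sub>v u) = (L i * D i j) *\<^sub>v u"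
    by (rule assoc_mult_mat_vec[OF block_mats(1)[OF i] Dij u, symmetric])
  also have "\<dots> = (D i j * L j + C i * D (i - 1) j) *\<^sub>v u" unfolding Dm_sylvester[OF ji] ..
  also have "\<dots> = D i j *\<^sub>v (L j *\<^sub>v u) + C i *\<^sub>v (D (i - 1) j *\<^sub>v u)"
    using Dij Dij' block_mats[OF j] Ci u by (simp add: add_mult_distrib_mat_vec[of _ "d i" "d j"])
  finally show ?thesis using Ci Dij' u q by simp
qed

lemma Lin_prodsp:
  assumes x: "x \<in> prodsp n d"
  shows "Lin n L C x \<in> prodsp n d"
proof -
  have x_blocks: "x i \<in> carrier_vec (d i)" if "i \<in> {1..n}" for i
    using x that unfolding prodsp_def by simp
  have "Lin n L C x i \<in> carrier_vec (d i)" if i: "i \<in> {1..n}" for i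
  proof (cases "i = 1")
    case True
    then show ?thesis using i block_mats(1)[OF i] x_blocks[OF i] unfolding Lin_def by simp
  next
    case False
    then have "C i \<in> carrier_mat (d i) (d (i - 1))" using Cdim i by auto
    then show ?thesis using False i block_mats(1)[OF i] x_blocks[OF i]
      unfolding Lin_def carrier_vec_def by simp
  qed
  then show ?thesis unfolding prodsp_def by (auto simp: Lin_def)
qed

lemma funpow_Lin_prodsp: "x \<in> prodsp n d \<Longrightarrow> (Lin n L C ^^ t) x \<in> prodsp n d"
  by (induction t) (auto intro: Lin_prodsp)

lemma Lin_block_sum_step:
  assumes y: "y \<in> prodsp n d" and u: "\<And>j. j \<in> {1..n} \<Longrightarrow> u j \<in> carrier_vec (d j)"
    and y_eq: "\<And>i q. i \<in> {1..n} \<Longrightarrow> q < d i \<Longrightarrow>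
      y i $ q = (\<Sum>j\<in>{1..i}. (-1) ^ (i - j) * (D i j *\<^sub>v u j) $ q)"
    and i: "i \<in> {1..n}" and q: "q < d i"
  shows "Lin n L C y i $ q = (\<Sum>j\<in>{1..i}. (-1) ^ (i - j) * (D i j *\<^sub>v (L j *\<^sub>v u j)) $ q)"
proof -
  have y_blocks: "y k \<in> carrier_vec (d k)" if "k \<in> {1..n}" for k
    using y that unfolding prodsp_def by auto
  have Du: "D k j *\<^sub>v u j \<in> carrier_vec (d k)" if "k \<in> {1..n}" "j \<in> {1..k}" for k j
    using Dm_carrier[of j k] u[of j] that by auto
  have Dii: "D i i = 1\<^sub>m (d i)" using i by (cases i) auto
  have Ly: "(L i *\<^sub>v y i) $ q = (L i *\<^sub>v u i) $ q
      + (\<Sum>j\<in>{1..<i}. (-1) ^ (i - j) * (L i *\<^sub>v (D i j *\<^sub>v u j)) $ q)"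
    using mult_mat_vec_index_sum_family[OF block_mats(1)[OF i] y_blocks[OF i] q Du[OF i] y_eq[OF i]]
      i u[OF i] by (simp add: sum.last_plus Dii)
  have target: "(\<Sum>j\<in>{1..i}. (-1) ^ (i - j) * (D i j *\<^sub>v (L j *\<^sub>v u j)) $ q)
      = (L i *\<^sub>v u i) $ q + (\<Sum>j\<in>{1..<i}. (-1) ^ (i - j) * (D i j *\<^sub>v (L j *\<^sub>v u j)) $ q)"
    using i block_mats(1)[OF i] u[OF i] by (simp add: sum.last_plus Dii)
  show ?thesis
  proof (cases "i = 1")
    case True
    then show ?thesis using Ly target i unfolding Lin_def by simp
  next
    case False
    then have i': "i - 1 \<in> {1..n}" and ints: "{1..i - 1} = {1..<i}" using i by auto
    have Ci: "C i \<in> carrier_mat (d i) (d (i - 1))" using Cdim i False by auto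
    have "(C i *\<^sub>v y (i - 1)) $ q
        = (\<Sum>j\<in>{1..<i}. (-1) ^ (i - 1 - j) * (C i *\<^sub>v (D (i - 1) j *\<^sub>v u j)) $ q)"
      using mult_mat_vec_index_sum_family[OF Ci y_blocks[OF i'] q Du[OF i'] y_eq[OF i']]
      unfolding ints .
    also have "\<dots> = (\<Sum>j\<in>{1..<i}. - ((-1) ^ (i - j) * (C i *\<^sub>v (D (i - 1) j *\<^sub>v u j)) $ q))"
      by (intro sum.cong refl) (simp add: minus_one_power_diff[of _ i])
    finally have Cy: "(C i *\<^sub>v y (i - 1)) $ q
        = (\<Sum>j\<in>{1..<i}. - ((-1) ^ (i - j) * (C i *\<^sub>v (D (i - 1) j *\<^sub>v u j)) $ q))" .
    have "Lin n L C y i $ q = (L i *\<^sub>v y i) $ q + (C i *\<^sub>v y (i - 1)) $ q"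
      using False i q Ci unfolding Lin_def by simp
    also have "\<dots> = (L i *\<^sub>v u i) $ q + (\<Sum>j\<in>{1..<i}. (-1) ^ (i - j) * (L i *\<^sub>v (D i j *\<^sub>v u j)) $ q
        - (-1) ^ (i - j) * (C i *\<^sub>v (D (i - 1) j *\<^sub>v u j)) $ q)"
      unfolding Ly Cy by (simp add: sum_subtractf sum_negf)
    also have "\<dots> = (L i *\<^sub>v u i) $ q + (\<Sum>j\<in>{1..<i}. (-1) ^ (i - j) * (D i j *\<^sub>v (L j *\<^sub>v u j)) $ q)"
      using Dm_sylvester_index[of _ i] u i q
      by (intro arg_cong2[where f = "(+)"] refl sum.cong) (auto simp: algebra_simps)
    finally show ?thesis using target by simp
  qed
qed

lemma pert_block_inverse:
  assumes i: "i \<in> {1..n}" and x: "x i \<in> carrier_vec (d i)" and q: "q < d i"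
  shows "x i $ q = (\<Sum>j\<in>{1..i}. (-1) ^ (i - j) * (D i j *\<^sub>v P x j) $ q)"
proof -
  have Dii: "D i i = 1\<^sub>m (d i)" using i by (cases i) auto
  have "P x i $ q = x i $ q + (\<Sum>j\<in>{1..<i}. (-1) ^ (i - 1 - j) * (D i j *\<^sub>v P x j) $ q)"
    using pert_block_rec[of i] i q x by simp
  then show ?thesis
    using i pert_block_carrier[of i] by (simp add: sum.last_plus Dii minus_one_power_diff[of _ i] sum_negf)
qed

lemma funpow_Lin_block_sum:
  assumes x: "x \<in> prodsp n d" and i: "i \<in> {1..n}" and q: "q < d i"
  shows "(Lin n L C ^^ t) x i $ q = (\<Sum>j\<in>{1..i}. (-1) ^ (i - j) * (D i j *\<^sub>v U x j t) $ q)"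
  using i q
proof (induction t arbitrary: i q)
  case 0
  then show ?case using pert_block_inverse x unfolding prodsp_def by auto
next
  case (Suc t)
  have "U x j t \<in> carrier_vec (d j)" if "j \<in> {1..n}" for j
    using that block_mats(1)[OF that] by (induction t) (auto simp: pert_block_carrier)
  from Lin_block_sum_step[OF funpow_Lin_prodsp[OF x] this Suc.IH Suc.prems] show ?case by simp
qed

lemma Vi_block_sum_term:
  assumes i: "i \<in> {1..n}" and j: "j \<in> {1..i}" and s: "s < d i"
  shows "(Vi i *\<^sub>v (D i j *\<^sub>v U x j t)) $ s =
     (\<Sum>m<d j. (Vi i * D i j * V j) $$ (s, m) * (Vi j *\<^sub>v P x j) $ m * lam j m ^ t)"
proof -
  have j': "j \<in> {1..n}" using i j by auto
  have Dij: "D i j \<in> carrier_mat (d i) (d j)" using Dm_carrier[of j i] i j by auto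
  have P: "P x j \<in> carrier_vec (d j)" using pert_block_carrier j by auto
  define z where "z = vec (d j) (\<lambda>m. lam j m ^ t * (Vi j *\<^sub>v P x j) $ m)"
  have z: "z \<in> carrier_vec (d j)" unfolding z_def by simp
  have "U x j t = ((\<lambda>v. L j *\<^sub>v v) ^^ t) (V j *\<^sub>v (Vi j *\<^sub>v P x j))"
    using block_mats[OF j'] P by (simp flip: assoc_mult_mat_vec)
  also have "\<dots> = V j *\<^sub>v z"
    unfolding z_def using block_mats[OF j'] P by (intro funpow_mult_mat_vec_diagonalized) auto
  finally have U_eq: "U x j t = V j *\<^sub>v z" .
  have G: "Vi i * D i j * V j \<in> carrier_mat (d i) (d j)"
    using mult_carrier_mat[OF mult_carrier_mat[OF block_mats(5)[OF i] Dij] block_mats(2)[OF j']] .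
  have "Vi i *\<^sub>v (D i j *\<^sub>v U x j t) = (Vi i * D i j) *\<^sub>v (V j *\<^sub>v z)"
    unfolding U_eq using block_mats(2)[OF j'] z
    by (intro assoc_mult_mat_vec[OF block_mats(5)[OF i] Dij, symmetric]) simp
  also have "\<dots> = (Vi i * D i j * V j) *\<^sub>v z"
    by (rule assoc_mult_mat_vec[OF mult_carrier_mat[OF block_mats(5)[OF i] Dij] block_mats(2)[OF j'] z, symmetric])
  finally have "(Vi i *\<^sub>v (D i j *\<^sub>v U x j t)) $ s = (\<Sum>m<d j. (Vi i * D i j * V j) $$ (s, m) * z $ m)"
    using mult_mat_vec_index_sum[OF G z s] by simp
  also have "\<dots> = (\<Sum>m<d j. (Vi i * D i j * V j) $$ (s, m) * (Vi j *\<^sub>v P x j) $ m * lam j m ^ t)"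
    unfolding z_def by (intro sum.cong) auto
  finally show ?thesis .
qed

lemma Psi_Lin_minus_Nom_pert:
  assumes x: "x \<in> prodsp n d" and i: "i \<in> {1..n}" and s: "s < d i"
  shows "Psi d V i s ((Lin n L C ^^ t) x) - Psi d V i s ((Nom n L ^^ t) (pert n d L C V lam x))
    = (\<Sum>j\<in>{1..<i}. \<Sum>m<d j. (-1) ^ (i - j) * ((Vi i * D i j * V j) $$ (s, m) * (Vi j *\<^sub>v P x j) $ m)
        * lam j m ^ t)"
proof -
  have Lin_i: "(Lin n L C ^^ t) x i \<in> carrier_vec (d i)"
    using funpow_Lin_prodsp[OF x, of t] i unfolding prodsp_def by auto
  have U: "U x j t \<in> carrier_vec (d j)" if "j \<in> {1..n}" for j
    using that block_mats(1)[OF that] by (induction t) (auto simp: pert_block_carrier)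
  have DU: "D i j *\<^sub>v U x j t \<in> carrier_vec (d i)" if "j \<in> {1..i}" for j
    using Dm_carrier[of j i] U[of j] that i by auto
  have Dii: "D i i = 1\<^sub>m (d i)" using i by (cases i) auto
  have "Psi d V i s ((Lin n L C ^^ t) x) = (\<Sum>j\<in>{1..i}. (-1) ^ (i - j) * (Vi i *\<^sub>v (D i j *\<^sub>v U x j t)) $ s)"
    unfolding Psi_def using funpow_Lin_block_sum[OF x i] DU
    by (intro mult_mat_vec_index_sum_family[OF block_mats(5)[OF i] Lin_i s]) auto
  also have "\<dots> = (Vi i *\<^sub>v U x i t) $ s + (\<Sum>j\<in>{1..<i}. (-1) ^ (i - j) * (Vi i *\<^sub>v (D i j *\<^sub>v U x j t)) $ s)"
    using i U[OF i] by (simp add: sum.last_plus Dii)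
  moreover have "Psi d V i s ((Nom n L ^^ t) (pert n d L C V lam x)) = (Vi i *\<^sub>v U x i t) $ s"
    unfolding Psi_def funpow_Nom[OF i] pert_eq_pert_block[OF i] ..
  ultimately show ?thesis
    using Vi_block_sum_term[OF i _ s] by (simp add: sum_distrib_left mult.assoc)
qed

lemma Lin_Nom_pert_tendsto_zero:
  fixes nrm :: "nat \<Rightarrow> complex vec \<Rightarrow> real"
  assumes x: "x \<in> prodsp n d" and i: "i \<in> {1..n}" and s: "s < d i"
    and norms: "\<forall>i\<in>{1..n}. is_vnorm (d i) (nrm i)"
    and normincr: "\<forall>i\<in>{1..<n}. op_norm (d i) (nrm i) (L i) < op_norm (d (Suc i)) (nrm (Suc i)) (L (Suc i))"
  shows "(\<lambda>t. cmod (Psi d V i s ((Lin n L C ^^ t) x) - Psi d V i s ((Nom n L ^^ t) (pert n d L C V lam x)))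
           / op_norm (d i) (nrm i) (L i) ^ t) \<longlonglongrightarrow> 0"
proof -
  have bound: "cmod (lam j m) < op_norm (d i) (nrm i) (L i)" if jm: "(j, m) \<in> Sigma {1..<i} (\<lambda>j. {..<d j})" for j m
  proof -
    have j: "j \<in> {1..n}" and m: "m < d j" using jm i by auto
    have "cmod (lam j m) \<le> op_norm (d j) (nrm j) (L j)"
      using eigenvalue_norm_le_op_norm[OF _ block_mats(1)[OF j] lam_eigenvector[OF j m]] norms j by blast
    also have "\<dots> < op_norm (d i) (nrm i) (L i)"
      using step_less_imp_less[OF normincr] jm i by auto
    finally show ?thesis .
  qed
  define coeff where "coeff j m = (-1) ^ (i - j) * ((Vi i * D i j * V j) $$ (s, m) * (Vi j *\<^sub>v P x j) $ m)"
    for j m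
  have "(\<lambda>t. cmod (\<Sum>a\<in>Sigma {1..<i} (\<lambda>j. {..<d j}). coeff (fst a) (snd a) * lam (fst a) (snd a) ^ t)
      / op_norm (d i) (nrm i) (L i) ^ t) \<longlonglongrightarrow> 0"
    by (rule power_sum_div_power_tendsto_zero) (use bound in auto)
  then show ?thesis
    unfolding Psi_Lin_minus_Nom_pert[OF x i s] coeff_def[symmetric] by (simp add: sum.Sigma split_beta)
qed

end

lemma funpow_conj_homeoX:
  assumes homeo: "homeoX n d \<tau> \<tau>inv" and F: "\<And>x. x \<in> prodsp n d \<Longrightarrow> F x \<in> prodsp n d"
    and G: "\<And>x. x \<in> prodsp n d \<Longrightarrow> G x \<in> prodsp n d"
    and conj: "\<And>x. x \<in> prodsp n d \<Longrightarrow> F x = \<tau>inv (G (\<tau> x))" and x: "x \<in> prodsp n d"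
  shows "\<tau>inv ((G ^^ t) (\<tau> x)) = (F ^^ t) x"
proof -
  have "\<tau> (F y) = G (\<tau> y)" if "y \<in> prodsp n d" for y
    using conj[OF that] homeo G that unfolding homeoX_def by auto
  then have "(G ^^ t) (\<tau> x) = \<tau> ((F ^^ t) x)"
    by (intro funpow_intertwine[where h = \<tau> and G = G]) (use F x in auto)
  moreover have "(F ^^ t) x \<in> prodsp n d" using x F by (induction t) auto
  ultimately show ?thesis using homeo unfolding homeoX_def by auto
qed

theorem theorem4:
  fixes n :: nat and d :: "nat \<Rightarrow> nat"
    and nrm :: "nat \<Rightarrow> complex vec \<Rightarrow> real"
    and L C V :: "nat \<Rightarrow> complex mat" and lam :: "nat \<Rightarrow> nat \<Rightarrow> complex"
    and N1 :: "complex vec \<Rightarrow> complex vec"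
    and N :: "nat \<Rightarrow> complex vec \<Rightarrow> complex vec \<Rightarrow> complex vec"
    and \<tau> \<tau>inv :: "(nat \<Rightarrow> complex vec) \<Rightarrow> (nat \<Rightarrow> complex vec)"
  assumes n: "n \<ge> 1"
    and dpos: "\<forall>i\<in>{1..n}. d i \<ge> 1"
    and norms: "\<forall>i\<in>{1..n}. is_vnorm (d i) (nrm i)"
    and Ldim: "\<forall>i\<in>{1..n}. L i \<in> carrier_mat (d i) (d i)"
    and Cdim: "\<forall>i\<in>{2..n}. C i \<in> carrier_mat (d i) (d (i - 1))"
    and Linv: "\<forall>i\<in>{1..n}. invertible_mat (L i)"
    and Vdim: "\<forall>i\<in>{1..n}. V i \<in> carrier_mat (d i) (d i)"
    and Vinv: "\<forall>i\<in>{1..n}. invertible_mat (V i)"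
    and diagz: "\<forall>i\<in>{1..n}. L i * V i = V i * diag_of (d i) (lam i)"
    and disj: "\<forall>i\<in>{1..n}. \<forall>j\<in>{1..n}. i \<noteq> j \<longrightarrow> spectrum (L i) \<inter> spectrum (L j) = {}"
    and normincr: "\<forall>i\<in>{1..<n}. op_norm (d i) (nrm i) (L i) < op_norm (d (Suc i)) (nrm (Suc i)) (L (Suc i))"
    and normle1: "op_norm (d n) (nrm n) (L n) \<le> 1"
    and N1map: "\<forall>v\<in>carrier_vec (d 1). N1 v \<in> carrier_vec (d 1)"
    and Nmap: "\<forall>i\<in>{2..n}. \<forall>u\<in>carrier_vec (d (i - 1)). \<forall>v\<in>carrier_vec (d i).
                 N i u v \<in> carrier_vec (d i)"
    and homeo: "homeoX n d \<tau> \<tau>inv"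
    and conj: "\<forall>x\<in>prodsp n d. Lin n L C x = \<tau>inv (NonLin n L C N1 N (\<tau> x))"
  shows "\<forall>i\<in>{1..n}. \<forall>s<d i. \<forall>y\<in>prodsp n d.
    (\<lambda>t. cmod (Psi d V i s (\<tau>inv ((NonLin n L C N1 N ^^ t) y))
               - Psi d V i s (\<tau>inv (((\<tau> \<circ> Nom n L \<circ> \<tau>inv) ^^ t) ((\<tau> \<circ> pert n d L C V lam \<circ> \<tau>inv) y))))
          / op_norm (d i) (nrm i) (L i) ^ t) \<longlonglongrightarrow> 0"
proof (intro ballI allI impI)
  fix i s y assume i: "i \<in> {1..n}" and s: "s < d i" and y: "y \<in> prodsp n d"
  interpret bidiagonal_system n d L C V lam
    by unfold_locales (fact Ldim Cdim Linv Vdim Vinv diagz disj)+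
  have \<tau>: "\<And>x. x \<in> prodsp n d \<Longrightarrow> \<tau> x \<in> prodsp n d" "\<And>x. x \<in> prodsp n d \<Longrightarrow> \<tau>inv (\<tau> x) = x"
    and \<tau>inv: "\<And>y. y \<in> prodsp n d \<Longrightarrow> \<tau>inv y \<in> prodsp n d" "\<And>y. y \<in> prodsp n d \<Longrightarrow> \<tau> (\<tau>inv y) = y"
    using homeo unfolding homeoX_def by auto
  define x where "x = \<tau>inv y"
  have x: "x \<in> prodsp n d" and y_eq: "y = \<tau> x" unfolding x_def using \<tau>inv y by auto
  have Lin_orbit: "\<tau>inv ((NonLin n L C N1 N ^^ t) y) = (Lin n L C ^^ t) x" for t
    unfolding y_eq using NonLin_prodsp[OF Ldim N1map Nmap] conj x
    by (intro funpow_conj_homeoX[OF homeo Lin_prodsp]) auto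
  have Nom_orbit: "\<tau>inv (((\<tau> \<circ> Nom n L \<circ> \<tau>inv) ^^ t) ((\<tau> \<circ> pert n d L C V lam \<circ> \<tau>inv) y))
      = (Nom n L ^^ t) (pert n d L C V lam x)" for t
    unfolding x_def[symmetric] comp_apply using Nom_prodsp[OF Ldim] \<tau> \<tau>inv pert_prodsp
    by (intro funpow_conj_homeoX[OF homeo Nom_prodsp[OF Ldim]]) auto
  show "(\<lambda>t. cmod (Psi d V i s (\<tau>inv ((NonLin n L C N1 N ^^ t) y))
               - Psi d V i s (\<tau>inv (((\<tau> \<circ> Nom n L \<circ> \<tau>inv) ^^ t) ((\<tau> \<circ> pert n d L C V lam \<circ> \<tau>inv) y))))
          / op_norm (d i) (nrm i) (L i) ^ t) \<longlonglongrightarrow> 0"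
    unfolding Lin_orbit Nom_orbit by (rule Lin_Nom_pert_tendsto_zero[OF x i s norms normincr])
qed

end
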